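(* Let $\mathcal{S}=(\mathscr{X},\nabla)$ be a non-commutative spacetime. Then there exists an implication $\to_{\mathcal{S}}:\mathscr{X}^{op}\times\mathscr{X}\to\mathscr{X}$ on the monoidal poset $\mathscr{X}$ such that for all $a,b,c\in\mathscr{X}$, \[ a\otimes\nabla b\le c \iff b\le a\to_{\mathcal{S}} c . \]
   Context: A monoidal poset $(A,\le,\otimes,e)$ is a poset with a monoid structure $(A,\otimes,e)$ whose multiplication is order preserving in each argument. A quantale is a monoidal poset whose underlying poset has all (arbitrary) joins and whose multiplication distributes over arbitrary joins in each argument. A monotone map $f$ between monoidal posets is oplax monoidal if $f(e)\le e$ and $f(a\otimes b)\le f(a)\otimes f(b)$ for all $a,b$. A non-commutative spacetime is a pair $(\mathscr{X},\nabla)$ where $\mathscr{X}$ is a quantale and $\nabla:\mathscr{X}\to\mathscr{X}$ is a join-preserving oplax monoidal map. An implication on a monoidal poset $(A,\le,\otimes,e)$ is a function $\to:A^{op}\times A\to A$, order reversing in its first and order preserving in its second argument, such that $e\le a\to a$ and $(a\to b)\otimes(b\to c)\le a\to c$ for all $a,b,c\in A$. *)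

theory Defs
  imports Main
begin

definition monoidal_poset :: "('a::order \<Rightarrow> 'a \<Rightarrow> 'a) \<Rightarrow> 'a \<Rightarrow> bool" where
  "monoidal_poset mul e \<longleftrightarrow>
     (\<forall>a b c. mul (mul a b) c = mul a (mul b c)) \<and>
     (\<forall>a. mul e a = a \<and> mul a e = a) \<and>
     (\<forall>a a' b b'. a \<le> a' \<longrightarrow> b \<le> b' \<longrightarrow> mul a b \<le> mul a' b')"

definition quantale :: "('a::complete_lattice \<Rightarrow> 'a \<Rightarrow> 'a) \<Rightarrow> 'a \<Rightarrow> bool" where
  "quantale mul e \<longleftrightarrow> monoidal_poset mul e \<and>
     (\<forall>a S. mul a (Sup S) = (SUP s\<in>S. mul a s)) \<and>
     (\<forall>a S. mul (Sup S) a = (SUP s\<in>S. mul s a))"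

definition oplax_monoidal ::
    "('a::order \<Rightarrow> 'a \<Rightarrow> 'a) \<Rightarrow> 'a \<Rightarrow> ('b::order \<Rightarrow> 'b \<Rightarrow> 'b) \<Rightarrow> 'b \<Rightarrow> ('a \<Rightarrow> 'b) \<Rightarrow> bool" where
  "oplax_monoidal mulA eA mulB eB f \<longleftrightarrow> mono f \<and> f eA \<le> eB \<and>
     (\<forall>a b. f (mulA a b) \<le> mulB (f a) (f b))"

definition join_preserving :: "('a::complete_lattice \<Rightarrow> 'b::complete_lattice) \<Rightarrow> bool" where
  "join_preserving f \<longleftrightarrow> (\<forall>S. f (Sup S) = (SUP s\<in>S. f s))"

definition noncomm_spacetime :: "('a::complete_lattice \<Rightarrow> 'a \<Rightarrow> 'a) \<Rightarrow> 'a \<Rightarrow> ('a \<Rightarrow> 'a) \<Rightarrow> bool" where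
  "noncomm_spacetime mul e nabla \<longleftrightarrow> quantale mul e \<and> join_preserving nabla \<and>
     oplax_monoidal mul e mul e nabla"

definition is_implication :: "('a::order \<Rightarrow> 'a \<Rightarrow> 'a) \<Rightarrow> 'a \<Rightarrow> ('a \<Rightarrow> 'a \<Rightarrow> 'a) \<Rightarrow> bool" where
  "is_implication mul e imp \<longleftrightarrow>
     (\<forall>a a' b. a \<le> a' \<longrightarrow> imp a' b \<le> imp a b) \<and>
     (\<forall>a b b'. b \<le> b' \<longrightarrow> imp a b \<le> imp a b') \<and>
     (\<forall>a. e \<le> imp a a) \<and>
     (\<forall>a b c. mul (imp a b) (imp b c) \<le> imp a c)"

end

theory Submission
  imports Defs
begin

text \<open>Since \<open>\<nabla>\<close> and \<open>a \<otimes> -\<close> preserve all joins, so does \<open>b \<mapsto> a \<otimes> \<nabla> b\<close>, and on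
  complete lattices every join-preserving map has a right adjoint; this adjoint, taken in
  \<open>c\<close>, is \<open>a \<rightarrow> c\<close>. The implication laws then follow from the adjunction alone:
  the unit law from \<open>\<nabla> e \<le> e\<close> and the composition law from
  \<open>\<nabla> (x \<otimes> y) \<le> \<nabla> x \<otimes> \<nabla> y\<close> together with associativity.\<close>

definition right_adjoint :: "('a::complete_lattice \<Rightarrow> 'b::order) \<Rightarrow> 'b \<Rightarrow> 'a" where
  "right_adjoint g c = Sup {b. g b \<le> c}"

lemma join_preserving_mono:
  assumes "join_preserving g"
  shows "mono g"
proof
  fix x y :: 'a
  assume "x \<le> y"
  have "g (sup x y) = sup (g x) (g y)"
    using assms unfolding join_preserving_def
    by (metis Sup_insert Sup_empty image_empty image_insert sup_bot_right)
  then show "g x \<le> g y"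
    using \<open>x \<le> y\<close> by (metis sup.absorb2 sup.cobounded1)
qed

lemma join_preserving_comp:
  assumes "join_preserving f" and "join_preserving g"
  shows "join_preserving (f \<circ> g)"
  using assms unfolding join_preserving_def by (simp add: image_comp)

lemma join_preserving_right_adjoint:
  assumes "join_preserving g"
  shows "g b \<le> c \<longleftrightarrow> b \<le> right_adjoint g c"
proof
  assume "g b \<le> c"
  then show "b \<le> right_adjoint g c"
    unfolding right_adjoint_def by (simp add: Sup_upper)
next
  assume "b \<le> right_adjoint g c"
  then have "g b \<le> g (Sup {b. g b \<le> c})"
    using join_preserving_mono[OF assms] unfolding right_adjoint_def by (simp add: monoD)
  also have "\<dots> = (SUP b\<in>{b. g b \<le> c}. g b)"
    using assms unfolding join_preserving_def by blast
  also have "\<dots> \<le> c"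
    by (rule SUP_least) simp
  finally show "g b \<le> c" .
qed

lemma is_implication_if_adjunction:
  assumes "monoidal_poset mul e"
    and "oplax_monoidal mul e mul e nabla"
    and adj: "\<And>a b c. mul a (nabla b) \<le> c \<longleftrightarrow> b \<le> imp a c"
  shows "is_implication mul e imp"
proof -
  have assoc: "\<And>a b c. mul (mul a b) c = mul a (mul b c)"
    and unit_right: "\<And>a. mul a e = a"
    and mul_mono: "\<And>a a' b b'. a \<le> a' \<Longrightarrow> b \<le> b' \<Longrightarrow> mul a b \<le> mul a' b'"
    using assms(1) unfolding monoidal_poset_def by blast+
  have nabla_unit: "nabla e \<le> e"
    and nabla_mul: "\<And>x y. nabla (mul x y) \<le> mul (nabla x) (nabla y)"
    using assms(2) unfolding oplax_monoidal_def by blast+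
  have counit: "mul a (nabla (imp a c)) \<le> c" for a c
    using adj by blast
  show ?thesis
    unfolding is_implication_def
  proof (intro conjI allI impI)
    fix a a' b :: 'a
    assume "a \<le> a'"
    then have "mul a (nabla (imp a' b)) \<le> mul a' (nabla (imp a' b))"
      by (simp add: mul_mono)
    then show "imp a' b \<le> imp a b"
      using counit adj order_trans by metis
  next
    fix a b b' :: 'a
    assume "b \<le> b'"
    then show "imp a b \<le> imp a b'"
      using counit adj order_trans by metis
  next
    fix a :: 'a
    have "mul a (nabla e) \<le> a"
      using mul_mono[OF order_refl nabla_unit] unit_right by metis
    then show "e \<le> imp a a"
      using adj by blast
  next
    fix a b c :: 'a
    let ?x = "imp a b" and ?y = "imp b c"
    have "mul a (nabla (mul ?x ?y)) \<le> mul a (mul (nabla ?x) (nabla ?y))"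
      by (simp add: mul_mono nabla_mul)
    also have "\<dots> = mul (mul a (nabla ?x)) (nabla ?y)"
      by (simp add: assoc)
    also have "\<dots> \<le> mul b (nabla ?y)"
      by (simp add: mul_mono counit)
    also have "\<dots> \<le> c"
      by (rule counit)
    finally show "mul ?x ?y \<le> imp a c"
      using adj by blast
  qed
qed

theorem theorem5p7:
  fixes mul :: "'a::complete_lattice \<Rightarrow> 'a \<Rightarrow> 'a" and e :: 'a and nabla :: "'a \<Rightarrow> 'a"
  assumes "noncomm_spacetime mul e nabla"
  shows "\<exists>imp. is_implication mul e imp \<and>
           (\<forall>a b c. mul a (nabla b) \<le> c \<longleftrightarrow> b \<le> imp a c)"
proof -
  have quantale: "quantale mul e"
    and nabla_joins: "join_preserving nabla"
    and nabla_oplax: "oplax_monoidal mul e mul e nabla"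
    using assms unfolding noncomm_spacetime_def by blast+
  have "join_preserving (mul a)" for a
    using quantale unfolding quantale_def join_preserving_def by blast
  then have "join_preserving (mul a \<circ> nabla)" for a
    using nabla_joins by (rule join_preserving_comp)
  then have adj: "mul a (nabla b) \<le> c \<longleftrightarrow> b \<le> right_adjoint (mul a \<circ> nabla) c" for a b c
    using join_preserving_right_adjoint by fastforce
  moreover have "monoidal_poset mul e"
    using quantale unfolding quantale_def by blast
  ultimately have "is_implication mul e (\<lambda>a. right_adjoint (mul a \<circ> nabla))"
    using nabla_oplax by (intro is_implication_if_adjunction)
  with adj show ?thesis
    by blast
qed

end
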